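(* In a qubit stabilizer subsystem code, a region $R$ of physical qubits is bare-cleanable if and only if for every Pauli operator $P_L$ on the logical subsystem there exists a bare-CSP Pauli operator $P$ supported on $R^c$ that implements $P_L\otimes\mathrm{Id}_J$.
   Context: Stabilizer subsystem code: stabilizer group (abelian subgroup of the Pauli group not containing $-\mathrm{Id}$) with code space its common $+1$ eigenspace, isomorphic via an encoding isometry $V$ to an encoded space of encoded qubits, equipped with the tensor product structure and basis such that every codespace-preserving physical Pauli operator implements an encoded Pauli operator; the encoded qubits are divided into a logical subsystem $\mathcal{H}_L$ (at least one qubit) and a junk subsystem $\mathcal{H}_J$. $\Pi=VV^\dagger$. $A$ is CSP if $[A,\Pi]=0$; dressed-CSP if moreover $V^\dagger AV=A_L\otimes A_J$ (it implements $A_L\otimes A_J$); bare-CSP if also $A_J=\mathrm{Id}_J$. Supported on $R$: of the form $A_R\otimes\mathrm{Id}_{R^c}$. $R$ is bare-cleanable (correctable) if for every logical operator $A_L\in\mathcal{B}(\mathcal{H}_L)$ there is a bare-CSP operator supported on $R^c$ implementing $A_L\otimes\mathrm{Id}_J$. *)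

theory Defs
  imports "Jordan_Normal_Form.Schur_Decomposition"
begin

(* Computational basis of n qubits: index i < 2^n; qubit q carries the bit (i div 2^q) mod 2. *)
definition qbit :: "nat \<Rightarrow> nat \<Rightarrow> bool" where
  "qbit q i = odd (i div 2 ^ q)"

datatype pauli1 = PI | PX | PY | PZ

fun sigma :: "pauli1 \<Rightarrow> bool \<Rightarrow> bool \<Rightarrow> complex" where
  "sigma PI a b = (if a = b then 1 else 0)"
| "sigma PX a b = (if a \<noteq> b then 1 else 0)"
| "sigma PY a b = (if a = b then 0 else if a then \<i> else - \<i>)"
| "sigma PZ a b = (if a = b then (if a then -1 else 1) else 0)"

definition pauli_mat :: "nat \<Rightarrow> complex \<Rightarrow> (nat \<Rightarrow> pauli1) \<Rightarrow> complex mat" where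
  "pauli_mat n c p = mat (2^n) (2^n) (\<lambda>(i,j). c * (\<Prod>q<n. sigma (p q) (qbit q i) (qbit q j)))"

definition pauli_group :: "nat \<Rightarrow> complex mat set" where
  "pauli_group n = {pauli_mat n c p | c p. c \<in> {1, -1, \<i>, -\<i>}}"

(* Kronecker product A (x) B  (first factor most significant) *)
definition kron :: "complex mat \<Rightarrow> complex mat \<Rightarrow> complex mat" where
  "kron A B = mat (dim_row A * dim_row B) (dim_col A * dim_col B)
     (\<lambda>(i,j). A $$ (i div dim_row B, j div dim_col B) * B $$ (i mod dim_row B, j mod dim_col B))"

(* A is supported on the set of qubits T: A = A_T (x) Id_{T^c} *)
definition supported_on :: "nat \<Rightarrow> nat set \<Rightarrow> complex mat \<Rightarrow> bool" where
  "supported_on n T A \<longleftrightarrow> A \<in> carrier_mat (2^n) (2^n) \<and>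
     (\<exists>B :: (nat \<Rightarrow> bool) \<Rightarrow> (nat \<Rightarrow> bool) \<Rightarrow> complex.
        \<forall>i < 2^n. \<forall>j < 2^n. A $$ (i,j) =
          (if \<forall>q<n. q \<notin> T \<longrightarrow> qbit q i = qbit q j
           then B (\<lambda>q. q \<in> T \<and> qbit q i) (\<lambda>q. q \<in> T \<and> qbit q j) else 0))"

definition code_space :: "nat \<Rightarrow> complex mat set \<Rightarrow> complex vec set" where
  "code_space n S = {v \<in> carrier_vec (2^n). \<forall>s\<in>S. s *\<^sub>v v = v}"

(* Stabilizer subsystem code on n physical qubits with stabilizer group S, encoding isometry V
   onto kL + kJ encoded qubits; the logical subsystem consists of the kL most significant encoded
   qubits (first Kronecker factor), the junk subsystem of the remaining kJ qubits. *)
definition stabilizer_subsystem_code ::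
  "nat \<Rightarrow> nat \<Rightarrow> nat \<Rightarrow> complex mat set \<Rightarrow> complex mat \<Rightarrow> bool" where
  "stabilizer_subsystem_code n kL kJ S V \<longleftrightarrow>
     S \<subseteq> pauli_group n \<and> 1\<^sub>m (2^n) \<in> S \<and>
     (\<forall>a\<in>S. \<forall>b\<in>S. a * b \<in> S) \<and> (\<forall>a\<in>S. mat_adjoint a \<in> S) \<and>
     (\<forall>a\<in>S. \<forall>b\<in>S. a * b = b * a) \<and> - 1\<^sub>m (2^n) \<notin> S \<and>
     kL \<ge> 1 \<and>
     V \<in> carrier_mat (2^n) (2^(kL+kJ)) \<and>
     mat_adjoint V * V = 1\<^sub>m (2^(kL+kJ)) \<and>
     (\<forall>v\<in>carrier_vec (2^n). v \<in> code_space n S \<longleftrightarrow> (V * mat_adjoint V) *\<^sub>v v = v) \<and>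
     (\<forall>P\<in>pauli_group n. P * (V * mat_adjoint V) = (V * mat_adjoint V) * P \<longrightarrow>
          mat_adjoint V * P * V \<in> pauli_group (kL+kJ))"

definition code_proj :: "complex mat \<Rightarrow> complex mat" where
  "code_proj V = V * mat_adjoint V"

definition CSP :: "complex mat \<Rightarrow> complex mat \<Rightarrow> bool" where
  "CSP V A \<longleftrightarrow> A * code_proj V = code_proj V * A"

definition bare_implements :: "nat \<Rightarrow> complex mat \<Rightarrow> complex mat \<Rightarrow> complex mat \<Rightarrow> bool" where
  "bare_implements kJ V A AL \<longleftrightarrow> CSP V A \<and> mat_adjoint V * A * V = kron AL (1\<^sub>m (2^kJ))"

definition bare_cleanable :: "nat \<Rightarrow> nat \<Rightarrow> nat \<Rightarrow> complex mat \<Rightarrow> nat set \<Rightarrow> bool" where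
  "bare_cleanable n kL kJ V R \<longleftrightarrow>
     (\<forall>AL \<in> carrier_mat (2^kL) (2^kL). \<exists>A \<in> carrier_mat (2^n) (2^n).
        supported_on n ({..<n} - R) A \<and> bare_implements kJ V A AL)"

end

theory Submission
  imports Defs
begin

(* Pauli strings form a basis of the operators on n qubits, and an operator supported on T is a
   combination of Pauli strings acting trivially outside T.  Compressing by the encoding isometry,
   a Pauli string that does not preserve the code space is sent to zero: it anticommutes with some
   stabilizer, which the code projector absorbs on both sides.  Hence if A is supported on T and
   implements PL (x) Id_J for a logical Pauli PL, the Hilbert-Schmidt overlap of V^H A V = PL (x) Id_J
   with itself is a combination of overlaps with encoded code-space preserving Pauli strings on T,
   and one of them is nonzero.  Encoded code-space preserving Paulis are Paulis, and orthogonality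
   of Pauli strings forces this one to be a phase multiple of PL (x) Id_J.  Conversely, every logical
   operator is a combination of logical Paulis, and bare implementation is linear. *)

lemma qbit_iff_bit: "qbit q i \<longleftrightarrow> bit i q"
  unfolding qbit_def by (simp add: bit_iff_odd)

lemma qbit_div_pow2: "qbit q (i div 2^k) \<longleftrightarrow> qbit (q + k) i"
  by (simp add: qbit_iff_bit bit_drop_bit_eq drop_bit_eq_div[symmetric] add.commute)

lemma mod_pow2_eq_iff_qbit: "i mod 2^k = j mod 2^k \<longleftrightarrow> (\<forall>q<k. qbit q i \<longleftrightarrow> qbit q j)"
proof -
  have "i mod 2^k = j mod 2^k \<longleftrightarrow> take_bit k i = take_bit k j"
    by (simp add: take_bit_eq_mod)
  also have "\<dots> \<longleftrightarrow> (\<forall>q<k. qbit q i \<longleftrightarrow> qbit q j)"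
    by (auto simp: bit_eq_iff bit_take_bit_iff qbit_iff_bit)
  finally show ?thesis .
qed

lemma qbit_eq_imp_eq:
  assumes "i < 2^k" "j < 2^k" "\<forall>q<k. qbit q i \<longleftrightarrow> qbit q j"
  shows "i = j"
  using assms mod_pow2_eq_iff_qbit[of i k j] by simp

lemma sum_lessThan_double:
  fixes g :: "nat \<Rightarrow> 'a::comm_monoid_add"
  shows "(\<Sum>i<2*N. g i) = (\<Sum>m<N. g (2*m) + g (2*m+1))"
  by (induction N) (simp_all add: add.assoc)

lemma sum_pow2_prod_qbit:
  fixes f :: "nat \<Rightarrow> bool \<Rightarrow> 'a::comm_semiring_1"
  shows "(\<Sum>i<2^n. \<Prod>q<n. f q (qbit q i)) = (\<Prod>q<n. f q False + f q True)"
proof (induction n arbitrary: f)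
  case 0
  then show ?case by simp
next
  case (Suc n)
  have qbit_Suc: "qbit (Suc q) i = qbit q (i div 2)" for q i
    using qbit_div_pow2[of q i 1] by simp
  have low_bit: "(\<Prod>q<Suc n. f q (qbit q i)) = f 0 (odd i) * (\<Prod>q<n. f (Suc q) (qbit q (i div 2)))" for i
    unfolding prod.lessThan_Suc_shift qbit_Suc by (simp add: qbit_def)
  have "(\<Sum>i<2^Suc n. \<Prod>q<Suc n. f q (qbit q i))
     = (\<Sum>m<2^n. f 0 False * (\<Prod>q<n. f (Suc q) (qbit q m)) + f 0 True * (\<Prod>q<n. f (Suc q) (qbit q m)))"
    unfolding low_bit power_Suc sum_lessThan_double by simp
  also have "\<dots> = (f 0 False + f 0 True) * (\<Sum>m<2^n. \<Prod>q<n. f (Suc q) (qbit q m))"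
    by (simp add: sum.distrib distrib_right sum_distrib_left)
  also have "\<dots> = (\<Prod>q<Suc n. f q False + f q True)"
    by (simp only: prod.lessThan_Suc_shift Suc[of "\<lambda>q. f (Suc q)"])
  finally show ?case .
qed

lemma prod_of_bool: "finite F \<Longrightarrow> (\<Prod>q\<in>F. of_bool (P q)) = (of_bool (\<forall>q\<in>F. P q) :: 'a::comm_semiring_1)"
  by (induction F rule: finite_induct) auto

lemma sum_of_bool_unique:
  fixes f :: "'x \<Rightarrow> 'a::comm_semiring_1"
  assumes "finite X" "x0 \<in> X" "\<And>x. x \<in> X \<Longrightarrow> P x \<longleftrightarrow> C \<and> x = x0"
  shows "(\<Sum>x\<in>X. f x * of_bool (P x)) = (if C then f x0 else 0)"
proof -
  have "(\<Sum>x\<in>X. f x * of_bool (P x)) = (\<Sum>x\<in>X. if x = x0 then (if C then f x else 0) else 0)"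
    using assms(3) by (intro sum.cong) auto
  also have "\<dots> = (if C then f x0 else 0)"
    using assms(1,2) by (simp add: sum.delta')
  finally show ?thesis .
qed

section \<open>Single-qubit Pauli matrices\<close>

lemma UNIV_pauli1: "(UNIV :: pauli1 set) = {PI, PX, PY, PZ}"
  by (auto intro: pauli1.exhaust)

lemma finite_UNIV_pauli1 [simp]: "finite (UNIV :: pauli1 set)"
  by (simp add: UNIV_pauli1)

lemma sum_UNIV_pauli1: "(\<Sum>s\<in>UNIV. f s) = f PI + f PX + f PY + f PZ"
  for f :: "pauli1 \<Rightarrow> 'a::comm_monoid_add"
  by (simp add: UNIV_pauli1 add.assoc)

definition commute_sign :: "pauli1 \<Rightarrow> pauli1 \<Rightarrow> complex" where
  "commute_sign a b = (if a = PI \<or> b = PI \<or> a = b then 1 else -1)"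

lemma sigma_mult_commute:
  "(\<Sum>x\<in>UNIV. sigma a y x * sigma b x z) = commute_sign a b * (\<Sum>x\<in>UNIV. sigma b y x * sigma a x z)"
  by (cases a; cases b; cases y; cases z) (simp_all add: UNIV_bool commute_sign_def)

lemma sigma_orthogonal:
  "(\<Sum>x\<in>UNIV. \<Sum>y\<in>UNIV. cnj (sigma a x y) * sigma b x y) = (if a = b then 2 else 0)"
  by (cases a; cases b) (simp_all add: UNIV_bool)

lemma cnj_sigma: "cnj (sigma a x y) = sigma a y x"
  by (cases a; cases x; cases y) simp_all

(* The single-qubit matrix unit |a><b| is the combination of the sigma s with these coefficients. *)
definition unit_coeff :: "pauli1 \<Rightarrow> bool \<Rightarrow> bool \<Rightarrow> complex" where
  "unit_coeff s a b = (if a = b then (case s of PI \<Rightarrow> 1/2 | PZ \<Rightarrow> (if a then -1/2 else 1/2) | _ \<Rightarrow> 0)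
     else (case s of PX \<Rightarrow> 1/2 | PY \<Rightarrow> (if a then -\<i>/2 else \<i>/2) | _ \<Rightarrow> 0))"

lemma sum_unit_coeff_sigma: "(\<Sum>s\<in>UNIV. unit_coeff s a b * sigma s x y) = of_bool (x = a \<and> y = b)"
  unfolding sum_UNIV_pauli1 unit_coeff_def
  by (cases a; cases b; cases x; cases y) (simp_all add: complex_eq_iff)

lemma index_mult_mat_sum:
  assumes "A \<in> carrier_mat r k" "B \<in> carrier_mat k c" "i < r" "j < c"
  shows "(A * B) $$ (i,j) = (\<Sum>l<k. A $$ (i,l) * B $$ (l,j))"
  using assms by (auto simp: scalar_prod_def atLeast0LessThan intro!: sum.cong)

lemma dim_mat_adjoint [simp]:
  "dim_row (mat_adjoint A) = dim_col A" "dim_col (mat_adjoint A) = dim_row A"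
  unfolding mat_adjoint_def by simp_all

lemma index_mat_adjoint:
  "i < dim_col A \<Longrightarrow> j < dim_row A \<Longrightarrow> mat_adjoint A $$ (i,j) = cnj (A $$ (j,i))"
  for A :: "complex mat"
  unfolding mat_adjoint_def by (simp add: mat_of_rows_index)

lemma mat_adjoint_adjoint [simp]: "mat_adjoint (mat_adjoint A) = (A :: complex mat)"
  by (rule eq_matI) (auto simp: index_mat_adjoint)

lemma mat_adjoint_mult:
  fixes A B :: "complex mat"
  assumes "A \<in> carrier_mat r k" "B \<in> carrier_mat k c"
  shows "mat_adjoint (A * B) = mat_adjoint B * mat_adjoint A"
proof (rule eq_matI)
  fix i j
  assume "i < dim_row (mat_adjoint B * mat_adjoint A)" "j < dim_col (mat_adjoint B * mat_adjoint A)"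
  then have ij: "i < c" "j < r" using assms by auto
  have "mat_adjoint (A * B) $$ (i,j) = (\<Sum>l<k. cnj (B $$ (l,i)) * cnj (A $$ (j,l)))"
    using assms ij by (simp add: index_mat_adjoint index_mult_mat_sum[OF assms ij(2,1)] mult.commute)
  also have "\<dots> = (mat_adjoint B * mat_adjoint A) $$ (i,j)"
    using assms ij by (subst index_mult_mat_sum[of _ c k _ r]) (auto simp: index_mat_adjoint)
  finally show "mat_adjoint (A * B) $$ (i,j) = (mat_adjoint B * mat_adjoint A) $$ (i,j)" .
qed (use assms in auto)

lemma smult_neg_one_eq_self_imp_zero:
  fixes A :: "complex mat"
  assumes "A \<in> carrier_mat r c" "A = (-1) \<cdot>\<^sub>m A"
  shows "A = 0\<^sub>m r c"
proof (rule eq_matI)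
  fix i j
  assume ij: "i < dim_row (0\<^sub>m r c :: complex mat)" "j < dim_col (0\<^sub>m r c :: complex mat)"
  have "A $$ (i,j) = ((-1) \<cdot>\<^sub>m A) $$ (i,j)" using assms(2) by simp
  with ij assms(1) show "A $$ (i,j) = 0\<^sub>m r c $$ (i,j)" by simp
qed (use assms in auto)

definition mat_lincomb ::
  "nat \<Rightarrow> nat \<Rightarrow> 'x set \<Rightarrow> ('x \<Rightarrow> complex) \<Rightarrow> ('x \<Rightarrow> complex mat) \<Rightarrow> complex mat" where
  "mat_lincomb r c X w M = mat r c (\<lambda>(i,j). \<Sum>x\<in>X. w x * M x $$ (i,j))"

lemma mat_lincomb_carrier [simp]: "mat_lincomb r c X w M \<in> carrier_mat r c"
  and dim_mat_lincomb [simp]: "dim_row (mat_lincomb r c X w M) = r" "dim_col (mat_lincomb r c X w M) = c"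
  unfolding mat_lincomb_def by simp_all

lemma index_mat_lincomb:
  "i < r \<Longrightarrow> j < c \<Longrightarrow> mat_lincomb r c X w M $$ (i,j) = (\<Sum>x\<in>X. w x * M x $$ (i,j))"
  unfolding mat_lincomb_def by simp

lemma mat_lincomb_cong:
  "(\<And>x. x \<in> X \<Longrightarrow> M x = M' x) \<Longrightarrow> mat_lincomb r c X w M = mat_lincomb r c X w M'"
  by (rule eq_matI) (auto simp: index_mat_lincomb intro!: sum.cong)

lemma mat_lincomb_mult_right:
  assumes "\<And>x. x \<in> X \<Longrightarrow> M x \<in> carrier_mat r k" "N \<in> carrier_mat k c"
  shows "mat_lincomb r k X w M * N = mat_lincomb r c X w (\<lambda>x. M x * N)"
proof (rule eq_matI)
  fix i j
  assume "i < dim_row (mat_lincomb r c X w (\<lambda>x. M x * N))" "j < dim_col (mat_lincomb r c X w (\<lambda>x. M x * N))"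
  then have ij: "i < r" "j < c" by auto
  have "(mat_lincomb r k X w M * N) $$ (i,j) = (\<Sum>l<k. (\<Sum>x\<in>X. w x * M x $$ (i,l)) * N $$ (l,j))"
    using assms ij by (subst index_mult_mat_sum[of _ r k N c]) (auto simp: index_mat_lincomb)
  also have "\<dots> = (\<Sum>x\<in>X. w x * (\<Sum>l<k. M x $$ (i,l) * N $$ (l,j)))"
    unfolding sum_distrib_left sum_distrib_right by (rule trans[OF sum.swap]) (simp add: mult.assoc)
  also have "\<dots> = mat_lincomb r c X w (\<lambda>x. M x * N) $$ (i,j)"
    using assms ij by (auto simp: index_mat_lincomb index_mult_mat_sum[of _ r k _ c]
        simp del: index_mult_mat intro!: sum.cong)
  finally show "(mat_lincomb r k X w M * N) $$ (i,j) = mat_lincomb r c X w (\<lambda>x. M x * N) $$ (i,j)" .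
qed (use assms in auto)

lemma mat_lincomb_mult_left:
  assumes "\<And>x. x \<in> X \<Longrightarrow> M x \<in> carrier_mat k c" "N \<in> carrier_mat r k"
  shows "N * mat_lincomb k c X w M = mat_lincomb r c X w (\<lambda>x. N * M x)"
proof (rule eq_matI)
  fix i j
  assume "i < dim_row (mat_lincomb r c X w (\<lambda>x. N * M x))" "j < dim_col (mat_lincomb r c X w (\<lambda>x. N * M x))"
  then have ij: "i < r" "j < c" by auto
  have "(N * mat_lincomb k c X w M) $$ (i,j) = (\<Sum>l<k. N $$ (i,l) * (\<Sum>x\<in>X. w x * M x $$ (l,j)))"
    using assms ij by (subst index_mult_mat_sum[of N r k]) (auto simp: index_mat_lincomb)
  also have "\<dots> = (\<Sum>x\<in>X. w x * (\<Sum>l<k. N $$ (i,l) * M x $$ (l,j)))"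
    unfolding sum_distrib_left by (rule trans[OF sum.swap]) (simp add: mult.left_commute)
  also have "\<dots> = mat_lincomb r c X w (\<lambda>x. N * M x) $$ (i,j)"
    using assms ij by (auto simp: index_mat_lincomb index_mult_mat_sum[of _ r k _ c]
        simp del: index_mult_mat intro!: sum.cong)
  finally show "(N * mat_lincomb k c X w M) $$ (i,j) = mat_lincomb r c X w (\<lambda>x. N * M x) $$ (i,j)" .
qed (use assms in auto)

lemma mat_lincomb_sandwich:
  assumes "\<And>x. x \<in> X \<Longrightarrow> M x \<in> carrier_mat N N" "V \<in> carrier_mat N K"
  shows "mat_adjoint V * mat_lincomb N N X w M * V = mat_lincomb K K X w (\<lambda>x. mat_adjoint V * M x * V)"
proof -
  have "mat_adjoint V \<in> carrier_mat K N" using assms(2) by auto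
  with assms show ?thesis
    by (simp add: mat_lincomb_mult_left mat_lincomb_mult_right)
qed

lemma index_kron:
  "i < dim_row A * dim_row B \<Longrightarrow> j < dim_col A * dim_col B \<Longrightarrow>
   kron A B $$ (i,j) = A $$ (i div dim_row B, j div dim_col B) * B $$ (i mod dim_row B, j mod dim_col B)"
  unfolding kron_def by simp

lemma dim_kron [simp]:
  "dim_row (kron A B) = dim_row A * dim_row B" "dim_col (kron A B) = dim_col A * dim_col B"
  unfolding kron_def by simp_all

lemma kron_mat_lincomb_one:
  assumes "\<And>x. x \<in> X \<Longrightarrow> M x \<in> carrier_mat r c"
  shows "kron (mat_lincomb r c X w M) (1\<^sub>m K) = mat_lincomb (r*K) (c*K) X w (\<lambda>x. kron (M x) (1\<^sub>m K))"
proof (rule eq_matI)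
  fix i j
  assume "i < dim_row (mat_lincomb (r*K) (c*K) X w (\<lambda>x. kron (M x) (1\<^sub>m K)))"
    "j < dim_col (mat_lincomb (r*K) (c*K) X w (\<lambda>x. kron (M x) (1\<^sub>m K)))"
  then have ij: "i < r*K" "j < c*K" by auto
  then have "i div K < r" "j div K < c" by (auto simp: less_mult_imp_div_less)
  moreover have "kron (M x) (1\<^sub>m K) $$ (i,j) = M x $$ (i div K, j div K) * 1\<^sub>m K $$ (i mod K, j mod K)"
    if "x \<in> X" for x
    using assms[OF that] ij by (simp add: index_kron)
  ultimately show "kron (mat_lincomb r c X w M) (1\<^sub>m K) $$ (i,j)
      = mat_lincomb (r*K) (c*K) X w (\<lambda>x. kron (M x) (1\<^sub>m K)) $$ (i,j)"
    using ij by (simp add: index_kron index_mat_lincomb sum_distrib_right mult.assoc)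
qed auto

definition hs_inner :: "nat \<Rightarrow> complex mat \<Rightarrow> complex mat \<Rightarrow> complex" where
  "hs_inner N A B = (\<Sum>i<N. \<Sum>j<N. cnj (A $$ (i,j)) * B $$ (i,j))"

lemma hs_inner_zero [simp]: "hs_inner N A (0\<^sub>m N N) = 0"
  unfolding hs_inner_def by simp

lemma hs_inner_mat_lincomb: "hs_inner N A (mat_lincomb N N X w M) = (\<Sum>x\<in>X. w x * hs_inner N A (M x))"
proof -
  have "hs_inner N A (mat_lincomb N N X w M) = (\<Sum>i<N. \<Sum>j<N. \<Sum>x\<in>X. w x * (cnj (A $$ (i,j)) * M x $$ (i,j)))"
    unfolding hs_inner_def by (auto simp: index_mat_lincomb sum_distrib_left mult.left_commute intro!: sum.cong)
  also have "\<dots> = (\<Sum>x\<in>X. \<Sum>i<N. \<Sum>j<N. w x * (cnj (A $$ (i,j)) * M x $$ (i,j)))"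
    by (simp only: sum.swap[of _ X])
  also have "\<dots> = (\<Sum>x\<in>X. w x * hs_inner N A (M x))"
    unfolding hs_inner_def sum_distrib_left ..
  finally show ?thesis .
qed

section \<open>Pauli strings\<close>

lemma pauli_mat_carrier [simp]: "pauli_mat n c p \<in> carrier_mat (2^n) (2^n)"
  and dim_pauli_mat [simp]: "dim_row (pauli_mat n c p) = 2^n" "dim_col (pauli_mat n c p) = 2^n"
  unfolding pauli_mat_def by simp_all

lemma index_pauli_mat:
  "i < 2^n \<Longrightarrow> j < 2^n \<Longrightarrow> pauli_mat n c p $$ (i,j) = c * (\<Prod>q<n. sigma (p q) (qbit q i) (qbit q j))"
  unfolding pauli_mat_def by simp

lemma pauli_group_carrier: "P \<in> pauli_group n \<Longrightarrow> P \<in> carrier_mat (2^n) (2^n)"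
  unfolding pauli_group_def by auto

lemma pauli_mat_cong: "\<forall>q<n. p q = p' q \<Longrightarrow> pauli_mat n c p = pauli_mat n c p'"
  by (rule eq_matI) (auto simp: index_pauli_mat intro!: prod.cong)

lemma smult_pauli_mat: "a \<cdot>\<^sub>m pauli_mat n c p = pauli_mat n (a * c) p"
  by (rule eq_matI) (auto simp: index_pauli_mat)

lemma mat_adjoint_pauli_mat: "mat_adjoint (pauli_mat n 1 p) = pauli_mat n 1 p"
  by (rule eq_matI) (auto simp: index_mat_adjoint index_pauli_mat cnj_sigma)

lemma index_pauli_mat_mult:
  assumes "i < 2^n" "j < 2^n"
  shows "(pauli_mat n c p * pauli_mat n d r) $$ (i,j)
     = c * d * (\<Prod>q<n. \<Sum>x\<in>UNIV. sigma (p q) (qbit q i) x * sigma (r q) x (qbit q j))"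
proof -
  have "(pauli_mat n c p * pauli_mat n d r) $$ (i,j)
     = c * d * (\<Sum>k<2^n. \<Prod>q<n. sigma (p q) (qbit q i) (qbit q k) * sigma (r q) (qbit q k) (qbit q j))"
    using assms by (simp add: index_mult_mat_sum[of _ "2^n" "2^n" _ "2^n"] index_pauli_mat
        prod.distrib sum_distrib_left mult_ac del: index_mult_mat)
  also have "\<dots> = c * d * (\<Prod>q<n. \<Sum>x\<in>UNIV. sigma (p q) (qbit q i) x * sigma (r q) x (qbit q j))"
    by (subst sum_pow2_prod_qbit) (simp add: UNIV_bool)
  finally show ?thesis .
qed

lemma pauli_mat_mult_commute:
  "pauli_mat n c p * pauli_mat n d r
     = (\<Prod>q<n. commute_sign (p q) (r q)) \<cdot>\<^sub>m (pauli_mat n d r * pauli_mat n c p)"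
proof (rule eq_matI)
  fix i j
  assume "i < dim_row ((\<Prod>q<n. commute_sign (p q) (r q)) \<cdot>\<^sub>m (pauli_mat n d r * pauli_mat n c p))"
    "j < dim_col ((\<Prod>q<n. commute_sign (p q) (r q)) \<cdot>\<^sub>m (pauli_mat n d r * pauli_mat n c p))"
  then have "i < 2^n" "j < 2^n" by auto
  then show "(pauli_mat n c p * pauli_mat n d r) $$ (i,j)
      = ((\<Prod>q<n. commute_sign (p q) (r q)) \<cdot>\<^sub>m (pauli_mat n d r * pauli_mat n c p)) $$ (i,j)"
    by (simp add: index_pauli_mat_mult sigma_mult_commute[of "p _"] prod.distrib mult_ac del: index_mult_mat(1))
qed auto

lemma pauli_mat_commute_or_anticommute:
  "pauli_mat n c p * pauli_mat n d r = pauli_mat n d r * pauli_mat n c p \<or>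
   pauli_mat n c p * pauli_mat n d r = (-1) \<cdot>\<^sub>m (pauli_mat n d r * pauli_mat n c p)"
proof -
  have "(\<Prod>q<m. commute_sign (p q) (r q)) \<in> {1, -1}" for m
    by (induction m) (auto simp: commute_sign_def)
  then consider "(\<Prod>q<n. commute_sign (p q) (r q)) = 1" | "(\<Prod>q<n. commute_sign (p q) (r q)) = -1"
    by blast
  then show ?thesis
  proof cases
    case 1
    have "1 \<cdot>\<^sub>m A = A" for A :: "complex mat"
      by (rule eq_matI) auto
    with 1 show ?thesis using pauli_mat_mult_commute[of n c p d r] by simp
  next
    case 2
    then show ?thesis using pauli_mat_mult_commute[of n c p d r] by simp
  qed
qed

lemma hs_inner_pauli_mat:
  "hs_inner (2^n) (pauli_mat n c p) (pauli_mat n d r) = cnj c * d * (\<Prod>q<n. if p q = r q then 2 else 0)"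
proof -
  have "hs_inner (2^n) (pauli_mat n c p) (pauli_mat n d r)
     = cnj c * d * (\<Sum>i<2^n. \<Sum>j<2^n. \<Prod>q<n. cnj (sigma (p q) (qbit q i) (qbit q j)) * sigma (r q) (qbit q i) (qbit q j))"
    unfolding hs_inner_def
    by (auto simp: index_pauli_mat cnj_prod prod.distrib sum_distrib_left mult_ac intro!: sum.cong)
  also have "\<dots> = cnj c * d * (\<Sum>i<2^n. \<Prod>q<n. \<Sum>y\<in>UNIV. cnj (sigma (p q) (qbit q i) y) * sigma (r q) (qbit q i) y)"
    by (subst sum_pow2_prod_qbit[where f = "\<lambda>q y. cnj (sigma (p q) (qbit q i) y) * sigma (r q) (qbit q i) y" for i])
      (simp add: UNIV_bool)
  also have "\<dots> = cnj c * d * (\<Prod>q<n. \<Sum>x\<in>UNIV. \<Sum>y\<in>UNIV. cnj (sigma (p q) x y) * sigma (r q) x y)"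
    by (subst sum_pow2_prod_qbit[where f = "\<lambda>q x. \<Sum>y\<in>UNIV. cnj (sigma (p q) x y) * sigma (r q) x y"])
      (simp add: UNIV_bool add_ac)
  also have "\<dots> = cnj c * d * (\<Prod>q<n. if p q = r q then 2 else 0)"
    unfolding sigma_orthogonal ..
  finally show ?thesis .
qed

lemma hs_inner_pauli_mat_nonzero_iff:
  "hs_inner (2^n) (pauli_mat n c p) (pauli_mat n d r) \<noteq> 0 \<longleftrightarrow> c \<noteq> 0 \<and> d \<noteq> 0 \<and> (\<forall>q<n. p q = r q)"
  by (auto simp: hs_inner_pauli_mat prod_zero_iff)

lemma kron_pauli_mat_one:
  "kron (pauli_mat kL c p) (1\<^sub>m (2^kJ)) = pauli_mat (kL+kJ) c (\<lambda>q. if q < kJ then PI else p (q - kJ))"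
  (is "_ = pauli_mat _ c ?r")
proof (rule eq_matI)
  fix i j
  assume "i < dim_row (pauli_mat (kL+kJ) c ?r)" "j < dim_col (pauli_mat (kL+kJ) c ?r)"
  then have ij: "i < 2^kL * 2^kJ" "j < 2^kL * 2^kJ" by (auto simp: power_add)
  then have "i div 2^kJ < 2^kL" "j div 2^kJ < 2^kL" by (auto simp: less_mult_imp_div_less)
  with ij have "kron (pauli_mat kL c p) (1\<^sub>m (2^kJ)) $$ (i,j)
     = c * (\<Prod>q<kL. sigma (p q) (qbit (q+kJ) i) (qbit (q+kJ) j)) * of_bool (\<forall>q<kJ. qbit q i = qbit q j)"
    by (simp add: index_kron index_pauli_mat qbit_div_pow2 mod_pow2_eq_iff_qbit[symmetric])
  also have "of_bool (\<forall>q<kJ. qbit q i = qbit q j) = (\<Prod>q<kJ. sigma (?r q) (qbit q i) (qbit q j))"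
    using prod_of_bool[of "{..<kJ}" "\<lambda>q. qbit q i = qbit q j"] by (auto simp: of_bool_def)
  also have "c * (\<Prod>q<kL. sigma (p q) (qbit (q+kJ) i) (qbit (q+kJ) j)) * (\<Prod>q<kJ. sigma (?r q) (qbit q i) (qbit q j))
      = c * ((\<Prod>q<kJ. sigma (?r q) (qbit q i) (qbit q j))
      * (\<Prod>q<kL. sigma (?r (q+kJ)) (qbit (q+kJ) i) (qbit (q+kJ) j)))"
    by simp
  also have "\<dots> = c * (\<Prod>q<kL+kJ. sigma (?r q) (qbit q i) (qbit q j))"
  proof -
    have "(\<Prod>q<m+kJ. g q) = (\<Prod>q<kJ. g q) * (\<Prod>q<m. g (q+kJ))" for m and g :: "nat \<Rightarrow> complex"
      by (induction m) (simp_all add: mult_ac)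
    then show ?thesis by simp
  qed
  also have "\<dots> = pauli_mat (kL+kJ) c ?r $$ (i,j)"
    using ij by (simp add: index_pauli_mat power_add)
  finally show "kron (pauli_mat kL c p) (1\<^sub>m (2^kJ)) $$ (i,j) = pauli_mat (kL+kJ) c ?r $$ (i,j)" .
qed (auto simp: power_add)

section \<open>Pauli expansion of supported operators\<close>

definition pauli_strings_on :: "nat \<Rightarrow> nat set \<Rightarrow> (nat \<Rightarrow> pauli1) set" where
  "pauli_strings_on n T = PiE {..<n} (\<lambda>q. if q \<in> T then UNIV else {PI})"

lemma pauli_mat_supported_on:
  assumes "p \<in> pauli_strings_on n T"
  shows "supported_on n T (pauli_mat n c p)"
  unfolding supported_on_def
proof (intro conjI exI allI impI)
  show "pauli_mat n c p \<in> carrier_mat (2^n) (2^n)" by simp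
  fix i j :: nat
  assume ij: "i < 2^n" "j < 2^n"
  have outside: "p q = PI" if "q < n" "q \<notin> T" for q
    using PiE_mem[OF assms[unfolded pauli_strings_on_def], of q] that by simp
  have "pauli_mat n c p $$ (i,j) = c * (\<Prod>q<n. sigma (p q) (qbit q i) (qbit q j))"
    using ij by (simp add: index_pauli_mat)
  also have "(\<Prod>q<n. sigma (p q) (qbit q i) (qbit q j)) = (\<Prod>q\<in>{..<n} \<inter> T. sigma (p q) (qbit q i) (qbit q j))
        * (\<Prod>q\<in>{..<n} - T. sigma (p q) (qbit q i) (qbit q j))"
    by (rule prod.Int_Diff) simp
  also have "(\<Prod>q\<in>{..<n} - T. sigma (p q) (qbit q i) (qbit q j)) = (\<Prod>q\<in>{..<n} - T. of_bool (qbit q i = qbit q j))"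
    by (intro prod.cong) (auto simp: outside)
  also have "\<dots> = of_bool (\<forall>q\<in>{..<n} - T. qbit q i = qbit q j)"
    by (simp add: prod_of_bool)
  also have "(\<Prod>q\<in>{..<n} \<inter> T. sigma (p q) (qbit q i) (qbit q j))
      = (\<Prod>q\<in>{..<n} \<inter> T. sigma (p q) (q \<in> T \<and> qbit q i) (q \<in> T \<and> qbit q j))"
    by (intro prod.cong) auto
  finally show "pauli_mat n c p $$ (i,j) = (if \<forall>q<n. q \<notin> T \<longrightarrow> qbit q i = qbit q j
      then (\<lambda>\<alpha> \<beta>. c * (\<Prod>q\<in>{..<n} \<inter> T. sigma (p q) (\<alpha> q) (\<beta> q))) (\<lambda>q. q \<in> T \<and> qbit q i) (\<lambda>q. q \<in> T \<and> qbit q j)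
      else 0)"
    by (auto simp: of_bool_def)
qed

lemma supported_on_mat_lincomb:
  assumes "\<And>x. x \<in> X \<Longrightarrow> supported_on n T (M x)"
  shows "supported_on n T (mat_lincomb (2^n) (2^n) X w M)"
proof -
  have "\<forall>x\<in>X. \<exists>B. \<forall>i < 2^n. \<forall>j < 2^n. M x $$ (i,j) = (if \<forall>q<n. q \<notin> T \<longrightarrow> qbit q i = qbit q j
      then B (\<lambda>q. q \<in> T \<and> qbit q i) (\<lambda>q. q \<in> T \<and> qbit q j) else 0)"
    using assms unfolding supported_on_def by blast
  from bchoice[OF this] obtain B where B: "\<forall>x\<in>X. \<forall>i < 2^n. \<forall>j < 2^n. M x $$ (i,j) =
      (if \<forall>q<n. q \<notin> T \<longrightarrow> qbit q i = qbit q j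
       then B x (\<lambda>q. q \<in> T \<and> qbit q i) (\<lambda>q. q \<in> T \<and> qbit q j) else 0)"
    by blast
  show ?thesis
    unfolding supported_on_def
  proof (intro conjI exI allI impI)
    fix i j :: nat
    assume ij: "i < 2^n" "j < 2^n"
    show "mat_lincomb (2^n) (2^n) X w M $$ (i,j) = (if \<forall>q<n. q \<notin> T \<longrightarrow> qbit q i = qbit q j
      then (\<lambda>\<alpha> \<beta>. \<Sum>x\<in>X. w x * B x \<alpha> \<beta>) (\<lambda>q. q \<in> T \<and> qbit q i) (\<lambda>q. q \<in> T \<and> qbit q j) else 0)"
      (is "_ = (if ?C then _ else _)")
    proof (cases ?C)
      case True
      with ij B show ?thesis by (simp add: index_mat_lincomb)
    next
      case False
      with ij B show ?thesis by (simp add: index_mat_lincomb if_not_P[OF False])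
    qed
  qed simp
qed

lemma sum_prod_sum_eq_sum_PiE:
  fixes w :: "'x \<Rightarrow> 'a::comm_semiring_1" and n :: nat
  assumes "finite X" "\<And>q. finite (Ss q)"
  shows "(\<Sum>x\<in>X. w x * (\<Prod>q<n. \<Sum>s\<in>Ss q. g x q s * h q s))
    = (\<Sum>p\<in>PiE {..<n} Ss. (\<Sum>x\<in>X. w x * (\<Prod>q<n. g x q (p q))) * (\<Prod>q<n. h q (p q)))"
proof -
  have "(\<Prod>q<n. \<Sum>s\<in>Ss q. g x q s * h q s) = (\<Sum>p\<in>PiE {..<n} Ss. \<Prod>q<n. g x q (p q) * h q (p q))" for x
    using assms(2) by (intro prod_sum_PiE) auto
  then have "(\<Sum>x\<in>X. w x * (\<Prod>q<n. \<Sum>s\<in>Ss q. g x q s * h q s))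
      = (\<Sum>x\<in>X. \<Sum>p\<in>PiE {..<n} Ss. w x * (\<Prod>q<n. g x q (p q)) * (\<Prod>q<n. h q (p q)))"
    by (simp add: sum_distrib_left prod.distrib mult.assoc)
  also have "\<dots> = (\<Sum>p\<in>PiE {..<n} Ss. (\<Sum>x\<in>X. w x * (\<Prod>q<n. g x q (p q))) * (\<Prod>q<n. h q (p q)))"
    by (subst sum.swap) (simp add: sum_distrib_right)
  finally show ?thesis .
qed

(* Coefficient of sigma s on qubit q in the expansion of the matrix unit |fst x><snd x| on T,
   tensored with the identity outside T. *)
definition support_coeff :: "nat set \<Rightarrow> nat set \<times> nat set \<Rightarrow> nat \<Rightarrow> pauli1 \<Rightarrow> complex" where
  "support_coeff T x q s = (if q \<in> T then unit_coeff s (q \<in> fst x) (q \<in> snd x) else 1)"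

lemma sum_support_coeff_sigma:
  "(\<Sum>s\<in>(if q \<in> T then UNIV else {PI}). support_coeff T x q s * sigma s a b)
     = of_bool (if q \<in> T then a = (q \<in> fst x) \<and> b = (q \<in> snd x) else a = b)"
  by (cases "q \<in> T") (simp_all add: support_coeff_def sum_unit_coeff_sigma)

lemma supported_on_pauli_expansion:
  assumes T: "T \<subseteq> {..<n}" and A: "supported_on n T A"
  obtains d where "A = mat_lincomb (2^n) (2^n) (pauli_strings_on n T) d (pauli_mat n 1)"
proof -
  obtain B where B: "\<forall>i<2^n. \<forall>j<2^n. A $$ (i,j) = (if \<forall>q<n. q \<notin> T \<longrightarrow> qbit q i = qbit q j
      then B (\<lambda>q. q \<in> T \<and> qbit q i) (\<lambda>q. q \<in> T \<and> qbit q j) else 0)"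
    using A unfolding supported_on_def by blast
  let ?X = "Pow T \<times> Pow T"
  have fin: "finite ?X" using T finite_subset by blast
  define d where "d p = (\<Sum>x\<in>?X. B (\<lambda>q. q \<in> fst x) (\<lambda>q. q \<in> snd x) * (\<Prod>q<n. support_coeff T x q (p q)))" for p
  have "A $$ (i,j) = mat_lincomb (2^n) (2^n) (pauli_strings_on n T) d (pauli_mat n 1) $$ (i,j)"
    if ij: "i < 2^n" "j < 2^n" for i j
  proof -
    let ?match = "\<lambda>x q. if q \<in> T then qbit q i = (q \<in> fst x) \<and> qbit q j = (q \<in> snd x) else qbit q i = qbit q j"
    let ?x0 = "({q\<in>T. qbit q i}, {q\<in>T. qbit q j})"
    have unique: "(\<forall>q\<in>{..<n}. ?match x q) \<longleftrightarrow> (\<forall>q<n. q \<notin> T \<longrightarrow> qbit q i = qbit q j) \<and> x = ?x0"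
      if "x \<in> ?X" for x
    proof -
      from \<open>x \<in> ?X\<close> obtain \<alpha> \<beta> where x: "x = (\<alpha>, \<beta>)" "\<alpha> \<subseteq> T" "\<beta> \<subseteq> T"
        by auto
      then show ?thesis
        using T by (auto simp: set_eq_iff)
    qed
    have "mat_lincomb (2^n) (2^n) (pauli_strings_on n T) d (pauli_mat n 1) $$ (i,j)
        = (\<Sum>p\<in>pauli_strings_on n T. d p * (\<Prod>q<n. sigma (p q) (qbit q i) (qbit q j)))"
      using ij by (simp add: index_mat_lincomb index_pauli_mat)
    also have "\<dots> = (\<Sum>x\<in>?X. B (\<lambda>q. q \<in> fst x) (\<lambda>q. q \<in> snd x)
        * (\<Prod>q<n. \<Sum>s\<in>(if q \<in> T then UNIV else {PI}). support_coeff T x q s * sigma s (qbit q i) (qbit q j)))"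
      unfolding d_def pauli_strings_on_def by (rule sum_prod_sum_eq_sum_PiE[symmetric]) (use fin in auto)
    also have "\<dots> = (\<Sum>x\<in>?X. B (\<lambda>q. q \<in> fst x) (\<lambda>q. q \<in> snd x) * of_bool (\<forall>q\<in>{..<n}. ?match x q))"
      by (simp only: sum_support_coeff_sigma prod_of_bool finite_lessThan)
    also have "\<dots> = (if \<forall>q<n. q \<notin> T \<longrightarrow> qbit q i = qbit q j
        then B (\<lambda>q. q \<in> T \<and> qbit q i) (\<lambda>q. q \<in> T \<and> qbit q j) else 0)"
      by (subst sum_of_bool_unique[OF fin _ unique]) auto
    finally show ?thesis using B ij by simp
  qed
  with A show thesis
    by (intro that eq_matI) (auto simp: supported_on_def)
qed

lemma supported_on_all:
  assumes "A \<in> carrier_mat (2^n) (2^n)"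
  shows "supported_on n {..<n} A"
proof -
  define idx where "idx \<alpha> = (THE i. i < 2^n \<and> (\<forall>q<n. qbit q i = \<alpha> q))" for \<alpha>
  have "idx (\<lambda>q. q \<in> {..<n} \<and> qbit q i) = i" if "i < 2^n" for i
    unfolding idx_def using that by (intro the_equality) (auto intro: qbit_eq_imp_eq)
  then show ?thesis
    using assms unfolding supported_on_def
    by (intro conjI exI[of _ "\<lambda>\<alpha> \<beta>. A $$ (idx \<alpha>, idx \<beta>)"]) auto
qed

lemma pauli_expansion:
  assumes "A \<in> carrier_mat (2^n) (2^n)"
  obtains d where "A = mat_lincomb (2^n) (2^n) (pauli_strings_on n {..<n}) d (pauli_mat n 1)"
  using supported_on_pauli_expansion[OF _ supported_on_all[OF assms]] by blast

section \<open>Stabilizer subsystem codes\<close>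

lemma CSP_smult:
  assumes "A \<in> carrier_mat N N" "code_proj V \<in> carrier_mat N N" "CSP V A"
  shows "CSP V (a \<cdot>\<^sub>m A)"
  using assms unfolding CSP_def
  by (simp add: mult_smult_assoc_mat[OF assms(1,2)] mult_smult_distrib[OF assms(2,1)])

lemma bare_implements_mat_lincomb:
  assumes V: "V \<in> carrier_mat N (r * 2^kJ)"
    and M: "\<And>x. x \<in> X \<Longrightarrow> M x \<in> carrier_mat N N" and L: "\<And>x. x \<in> X \<Longrightarrow> L x \<in> carrier_mat r r"
    and impl: "\<And>x. x \<in> X \<Longrightarrow> bare_implements kJ V (M x) (L x)"
  shows "bare_implements kJ V (mat_lincomb N N X w M) (mat_lincomb r r X w L)"
proof -
  have P: "code_proj V \<in> carrier_mat N N"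
    using V unfolding code_proj_def by (auto intro!: carrier_matI)
  have "mat_lincomb N N X w M * code_proj V = mat_lincomb N N X w (\<lambda>x. M x * code_proj V)"
    by (rule mat_lincomb_mult_right[OF M P])
  also have "\<dots> = mat_lincomb N N X w (\<lambda>x. code_proj V * M x)"
    using impl by (intro mat_lincomb_cong) (simp add: bare_implements_def CSP_def)
  also have "\<dots> = code_proj V * mat_lincomb N N X w M"
    by (rule mat_lincomb_mult_left[OF M P, symmetric])
  finally have "CSP V (mat_lincomb N N X w M)"
    unfolding CSP_def .
  moreover have "mat_adjoint V * mat_lincomb N N X w M * V
      = mat_lincomb (r * 2^kJ) (r * 2^kJ) X w (\<lambda>x. mat_adjoint V * M x * V)"
    by (rule mat_lincomb_sandwich[OF M V])
  moreover have "\<dots> = mat_lincomb (r * 2^kJ) (r * 2^kJ) X w (\<lambda>x. kron (L x) (1\<^sub>m (2^kJ)))"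
    using impl by (intro mat_lincomb_cong) (simp add: bare_implements_def)
  moreover have "\<dots> = kron (mat_lincomb r r X w L) (1\<^sub>m (2^kJ))"
    by (rule kron_mat_lincomb_one[OF L, symmetric])
  ultimately show ?thesis
    unfolding bare_implements_def by simp
qed

locale subsystem_code =
  fixes n kL kJ :: nat and S :: "complex mat set" and V :: "complex mat"
  assumes code: "stabilizer_subsystem_code n kL kJ S V"
begin

lemma V_carrier [simp]: "V \<in> carrier_mat (2^n) (2^(kL+kJ))"
  using code unfolding stabilizer_subsystem_code_def by blast

lemma dim_V [simp]: "dim_row V = 2^n" "dim_col V = 2^(kL+kJ)"
  using carrier_matD[OF V_carrier] by simp_all

lemma adjoint_V_carrier [simp]: "mat_adjoint V \<in> carrier_mat (2^(kL+kJ)) (2^n)"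
  by (rule carrier_matI) simp_all

lemma code_proj_carrier [simp]: "code_proj V \<in> carrier_mat (2^n) (2^n)"
  unfolding code_proj_def by (rule mult_carrier_mat[OF V_carrier adjoint_V_carrier])

lemma dim_code_proj [simp]: "dim_row (code_proj V) = 2^n" "dim_col (code_proj V) = 2^n"
  unfolding code_proj_def by simp_all

lemma adjoint_V_mult_V: "mat_adjoint V * V = 1\<^sub>m (2^(kL+kJ))"
  using code unfolding stabilizer_subsystem_code_def by blast

lemma code_space_iff: "v \<in> carrier_vec (2^n) \<Longrightarrow> v \<in> code_space n S \<longleftrightarrow> code_proj V *\<^sub>v v = v"
  using code unfolding stabilizer_subsystem_code_def code_proj_def by blast

lemma stabilizer_pauli: "s \<in> S \<Longrightarrow> s \<in> pauli_group n"
  using code unfolding stabilizer_subsystem_code_def by blast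

lemma stabilizer_carrier [simp]: "s \<in> S \<Longrightarrow> s \<in> carrier_mat (2^n) (2^n)"
  using stabilizer_pauli pauli_group_carrier by blast

lemma stabilizer_adjoint: "s \<in> S \<Longrightarrow> mat_adjoint s \<in> S"
  using code unfolding stabilizer_subsystem_code_def by blast

lemma encoded_pauli: "P \<in> pauli_group n \<Longrightarrow> CSP V P \<Longrightarrow> mat_adjoint V * P * V \<in> pauli_group (kL+kJ)"
  using code unfolding stabilizer_subsystem_code_def CSP_def code_proj_def by blast

lemma adjoint_V_mult_code_proj: "mat_adjoint V * code_proj V = mat_adjoint V"
proof -
  have "mat_adjoint V * code_proj V = (mat_adjoint V * V) * mat_adjoint V"
    unfolding code_proj_def by (simp add: assoc_mult_mat[OF adjoint_V_carrier V_carrier adjoint_V_carrier])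
  then show ?thesis by (simp add: adjoint_V_mult_V)
qed

lemma code_proj_mult_V: "code_proj V * V = V"
proof -
  have "code_proj V * V = V * (mat_adjoint V * V)"
    unfolding code_proj_def by (simp add: assoc_mult_mat[OF V_carrier adjoint_V_carrier V_carrier])
  then show ?thesis by (simp add: adjoint_V_mult_V)
qed

lemma code_proj_idem: "code_proj V * code_proj V = code_proj V"
proof -
  have "code_proj V * code_proj V = V * (mat_adjoint V * code_proj V)"
    unfolding code_proj_def
    by (rule assoc_mult_mat[OF V_carrier adjoint_V_carrier code_proj_carrier[unfolded code_proj_def]])
  then show ?thesis using adjoint_V_mult_code_proj by (simp add: code_proj_def)
qed

lemma code_proj_adjoint: "mat_adjoint (code_proj V) = code_proj V"
  unfolding code_proj_def by (simp add: mat_adjoint_mult[OF V_carrier adjoint_V_carrier])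

lemma col_code_proj_in_code_space:
  assumes "j < 2^n"
  shows "col (code_proj V) j \<in> code_space n S"
proof -
  have "code_proj V *\<^sub>v col (code_proj V) j = col (code_proj V * code_proj V) j"
    using assms by (simp add: col_mult2[OF code_proj_carrier code_proj_carrier])
  then show ?thesis
    using assms code_space_iff[of "col (code_proj V) j"] by (simp add: code_proj_idem)
qed

lemma stabilizer_mult_code_proj:
  assumes "s \<in> S"
  shows "s * code_proj V = code_proj V"
proof (rule mat_col_eqI)
  fix j
  assume "j < dim_col (code_proj V)"
  then have j: "j < 2^n" by simp
  have "col (s * code_proj V) j = s *\<^sub>v col (code_proj V) j"
    using j by (rule col_mult2[OF stabilizer_carrier[OF assms] code_proj_carrier])
  also have "\<dots> = col (code_proj V) j"
    using col_code_proj_in_code_space[OF j] assms unfolding code_space_def by blast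
  finally show "col (s * code_proj V) j = col (code_proj V) j" .
qed (use stabilizer_carrier[OF assms] in auto)

lemma code_proj_mult_stabilizer:
  assumes "s \<in> S"
  shows "code_proj V * s = code_proj V"
proof -
  have "mat_adjoint (mat_adjoint s * code_proj V) = code_proj V * s"
    using mat_adjoint_mult[OF stabilizer_carrier[OF stabilizer_adjoint[OF assms]] code_proj_carrier]
    by (simp add: code_proj_adjoint)
  then show ?thesis
    using stabilizer_mult_code_proj[OF stabilizer_adjoint[OF assms]] by (simp add: code_proj_adjoint)
qed

lemma code_proj_sandwich_anticommuting:
  assumes s: "s \<in> S" and Q: "Q \<in> carrier_mat (2^n) (2^n)" and anti: "s * Q = (-1) \<cdot>\<^sub>m (Q * s)"
  shows "code_proj V * Q * code_proj V = 0\<^sub>m (2^n) (2^n)"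
proof (rule smult_neg_one_eq_self_imp_zero)
  let ?P = "code_proj V"
  have sc: "s \<in> carrier_mat (2^n) (2^n)" using s by simp
  have "?P * Q * ?P = (?P * s) * Q * ?P"
    by (simp add: code_proj_mult_stabilizer[OF s])
  also have "(?P * s) * Q = ?P * (s * Q)"
    by (rule assoc_mult_mat[OF code_proj_carrier sc Q])
  also have "?P * (s * Q) = (-1) \<cdot>\<^sub>m (?P * (Q * s))"
    unfolding anti by (rule mult_smult_distrib[OF code_proj_carrier mult_carrier_mat[OF Q sc]])
  also have "(-1) \<cdot>\<^sub>m (?P * (Q * s)) * ?P = (-1) \<cdot>\<^sub>m (?P * (Q * s) * ?P)"
    by (rule mult_smult_assoc_mat[OF mult_carrier_mat[OF code_proj_carrier mult_carrier_mat[OF Q sc]] code_proj_carrier])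
  also have "?P * (Q * s) * ?P = ?P * Q * (s * ?P)"
    using Q sc by (simp add: assoc_mult_mat[of _ "2^n" "2^n" _ "2^n" _ "2^n"])
  also have "s * ?P = ?P"
    by (rule stabilizer_mult_code_proj[OF s])
  finally show "?P * Q * ?P = (-1) \<cdot>\<^sub>m (?P * Q * ?P)" .
qed (use Q in \<open>simp add: mult_carrier_mat[of _ _ "2^n"]\<close>)

lemma commuting_preserves_code_space:
  assumes Q: "Q \<in> carrier_mat (2^n) (2^n)" and comm: "\<forall>s\<in>S. s * Q = Q * s"
    and v: "v \<in> code_space n S"
  shows "Q *\<^sub>v v \<in> code_space n S"
proof -
  have vc: "v \<in> carrier_vec (2^n)" using v unfolding code_space_def by blast
  have "s *\<^sub>v (Q *\<^sub>v v) = Q *\<^sub>v v" if s: "s \<in> S" for s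
  proof -
    have sc: "s \<in> carrier_mat (2^n) (2^n)" using s by simp
    have "s *\<^sub>v (Q *\<^sub>v v) = (Q * s) *\<^sub>v v"
      using assoc_mult_mat_vec[OF sc Q vc] comm s by simp
    also have "\<dots> = Q *\<^sub>v (s *\<^sub>v v)"
      by (rule assoc_mult_mat_vec[OF Q sc vc])
    also have "s *\<^sub>v v = v"
      using s v unfolding code_space_def by blast
    finally show ?thesis .
  qed
  with Q vc show ?thesis
    unfolding code_space_def by simp
qed

lemma code_proj_sandwich_commuting:
  assumes Q: "Q \<in> carrier_mat (2^n) (2^n)" and comm: "\<forall>s\<in>S. s * Q = Q * s"
  shows "code_proj V * Q * code_proj V = Q * code_proj V"
proof (rule mat_col_eqI)
  fix j
  assume "j < dim_col (Q * code_proj V)"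
  then have j: "j < 2^n" by simp
  let ?v = "col (code_proj V) j"
  have vc: "?v \<in> carrier_vec (2^n)" using j by simp
  have "Q *\<^sub>v ?v \<in> code_space n S"
    by (rule commuting_preserves_code_space[OF Q comm col_code_proj_in_code_space[OF j]])
  then have fixed: "code_proj V *\<^sub>v (Q *\<^sub>v ?v) = Q *\<^sub>v ?v"
    using Q vc code_space_iff by simp
  have "col (code_proj V * Q * code_proj V) j = code_proj V *\<^sub>v (Q *\<^sub>v ?v)"
    using j assoc_mult_mat_vec[OF code_proj_carrier Q vc]
    by (simp add: col_mult2[OF mult_carrier_mat[OF code_proj_carrier Q] code_proj_carrier])
  also have "\<dots> = col (Q * code_proj V) j"
    using Q j by (simp add: fixed col_mult2[OF Q code_proj_carrier])
  finally show "col (code_proj V * Q * code_proj V) j = col (Q * code_proj V) j" .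
qed (use Q in auto)

lemma CSP_if_commutes_with_stabilizers:
  assumes Q: "Q \<in> carrier_mat (2^n) (2^n)" and herm: "mat_adjoint Q = Q"
    and comm: "\<forall>s\<in>S. s * Q = Q * s"
  shows "CSP V Q"
proof -
  let ?P = "code_proj V"
  have PQP: "?P * Q * ?P \<in> carrier_mat (2^n) (2^n)"
    using Q by (simp add: mult_carrier_mat[of _ _ "2^n"])
  have "?P * Q = mat_adjoint (Q * ?P)"
    using mat_adjoint_mult[OF Q code_proj_carrier] by (simp add: herm code_proj_adjoint)
  also have "\<dots> = mat_adjoint (?P * Q * ?P)"
    by (simp add: code_proj_sandwich_commuting[OF Q comm])
  also have "\<dots> = ?P * Q * ?P"
    using Q mat_adjoint_mult[OF mult_carrier_mat[OF code_proj_carrier Q] code_proj_carrier]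
      mat_adjoint_mult[OF code_proj_carrier Q] assoc_mult_mat[OF code_proj_carrier Q code_proj_carrier]
    by (simp add: herm code_proj_adjoint)
  also have "\<dots> = Q * ?P"
    by (rule code_proj_sandwich_commuting[OF Q comm])
  finally show ?thesis
    unfolding CSP_def by simp
qed

lemma encoded_eq_encoded_code_proj_sandwich:
  assumes Q: "Q \<in> carrier_mat (2^n) (2^n)"
  shows "mat_adjoint V * Q * V = mat_adjoint V * (code_proj V * Q * code_proj V) * V"
proof -
  have PQ: "code_proj V * Q \<in> carrier_mat (2^n) (2^n)" by (rule mult_carrier_mat[OF code_proj_carrier Q])
  have PV: "code_proj V * V \<in> carrier_mat (2^n) (2^(kL+kJ))" by (simp add: code_proj_mult_V)
  have "mat_adjoint V * Q * V = (mat_adjoint V * code_proj V) * Q * (code_proj V * V)"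
    by (simp add: adjoint_V_mult_code_proj code_proj_mult_V)
  also have "\<dots> = mat_adjoint V * (code_proj V * Q * (code_proj V * V))"
    by (simp add: assoc_mult_mat[OF adjoint_V_carrier code_proj_carrier Q]
        assoc_mult_mat[OF adjoint_V_carrier PQ PV])
  also have "\<dots> = mat_adjoint V * (code_proj V * Q * code_proj V) * V"
    by (simp add: assoc_mult_mat[OF PQ code_proj_carrier V_carrier, symmetric]
        assoc_mult_mat[OF adjoint_V_carrier mult_carrier_mat[OF PQ code_proj_carrier] V_carrier])
  finally show ?thesis .
qed

lemma encoded_pauli_eq_zero_if_not_CSP:
  assumes "\<not> CSP V (pauli_mat n 1 p)"
  shows "mat_adjoint V * pauli_mat n 1 p * V = 0\<^sub>m (2^(kL+kJ)) (2^(kL+kJ))"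
proof -
  let ?Q = "pauli_mat n 1 p"
  obtain s where s: "s \<in> S" "s * ?Q \<noteq> ?Q * s"
    using assms CSP_if_commutes_with_stabilizers[of ?Q] mat_adjoint_pauli_mat by auto
  obtain c r where "s = pauli_mat n c r"
    using stabilizer_pauli[OF s(1)] unfolding pauli_group_def by blast
  then have "s * ?Q = (-1) \<cdot>\<^sub>m (?Q * s)"
    using s(2) pauli_mat_commute_or_anticommute by blast
  then have "code_proj V * ?Q * code_proj V = 0\<^sub>m (2^n) (2^n)"
    by (rule code_proj_sandwich_anticommuting[OF s(1) pauli_mat_carrier])
  then show ?thesis
    using encoded_eq_encoded_code_proj_sandwich[of ?Q] by simp
qed

lemma overlapping_CSP_pauli_component:
  assumes T: "T \<subseteq> {..<n}" and A: "supported_on n T A"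
    and overlap: "hs_inner (2^(kL+kJ)) L (mat_adjoint V * A * V) \<noteq> 0"
  obtains p where "p \<in> pauli_strings_on n T" "CSP V (pauli_mat n 1 p)"
    "hs_inner (2^(kL+kJ)) L (mat_adjoint V * pauli_mat n 1 p * V) \<noteq> 0"
proof -
  obtain d where A_exp: "A = mat_lincomb (2^n) (2^n) (pauli_strings_on n T) d (pauli_mat n 1)"
    by (rule supported_on_pauli_expansion[OF T A])
  have "hs_inner (2^(kL+kJ)) L (mat_adjoint V * A * V)
      = (\<Sum>p\<in>pauli_strings_on n T. d p * hs_inner (2^(kL+kJ)) L (mat_adjoint V * pauli_mat n 1 p * V))"
    unfolding A_exp by (simp add: mat_lincomb_sandwich[OF _ V_carrier] hs_inner_mat_lincomb)
  with overlap obtain p where p: "p \<in> pauli_strings_on n T"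
    and "d p * hs_inner (2^(kL+kJ)) L (mat_adjoint V * pauli_mat n 1 p * V) \<noteq> 0"
    by (auto elim: sum.not_neutral_contains_not_neutral)
  then have "hs_inner (2^(kL+kJ)) L (mat_adjoint V * pauli_mat n 1 p * V) \<noteq> 0"
    by simp
  moreover from this have "CSP V (pauli_mat n 1 p)"
    using encoded_pauli_eq_zero_if_not_CSP hs_inner_zero by metis
  ultimately show thesis
    using that p by blast
qed

lemma rephased_CSP_pauli_implements:
  assumes csp: "CSP V (pauli_mat n 1 p)" and c: "c \<in> {1, -1, \<i>, -\<i>}"
    and overlap: "hs_inner (2^(kL+kJ)) (pauli_mat (kL+kJ) c t) (mat_adjoint V * pauli_mat n 1 p * V) \<noteq> 0"
  obtains a where "a \<in> {1, -1, \<i>, -\<i>}" "CSP V (pauli_mat n a p)"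
    "mat_adjoint V * pauli_mat n a p * V = pauli_mat (kL+kJ) c t"
proof -
  let ?Q = "pauli_mat n 1 p"
  have "?Q \<in> pauli_group n" unfolding pauli_group_def by blast
  then obtain e u where e: "e \<in> {1, -1, \<i>, -\<i>}" and enc: "mat_adjoint V * ?Q * V = pauli_mat (kL+kJ) e u"
    using encoded_pauli[OF _ csp] unfolding pauli_group_def by blast
  with overlap have "\<forall>q<kL+kJ. u q = t q"
    by (simp add: hs_inner_pauli_mat_nonzero_iff)
  then have enc_t: "mat_adjoint V * ?Q * V = pauli_mat (kL+kJ) e t"
    unfolding enc by (rule pauli_mat_cong)
  define a where "a = c / e"
  have "a * e = c" using e by (auto simp: a_def)
  have Qa: "pauli_mat n a p = a \<cdot>\<^sub>m ?Q"
    by (simp add: smult_pauli_mat)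
  have "mat_adjoint V * (a \<cdot>\<^sub>m ?Q) * V = a \<cdot>\<^sub>m (mat_adjoint V * ?Q * V)"
    by (simp add: mult_smult_distrib[OF adjoint_V_carrier pauli_mat_carrier]
        mult_smult_assoc_mat[OF mult_carrier_mat[OF adjoint_V_carrier pauli_mat_carrier] V_carrier])
  also have "\<dots> = pauli_mat (kL+kJ) c t"
    by (simp add: enc_t smult_pauli_mat \<open>a * e = c\<close>)
  finally have "mat_adjoint V * pauli_mat n a p * V = pauli_mat (kL+kJ) c t"
    unfolding Qa .
  moreover have "CSP V (pauli_mat n a p)"
    unfolding Qa by (rule CSP_smult[OF pauli_mat_carrier code_proj_carrier csp])
  moreover have "a \<in> {1, -1, \<i>, -\<i>}"
    using c e by (auto simp: a_def)
  ultimately show thesis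
    using that by blast
qed

lemma supported_pauli_implements_if_supported_implements:
  assumes T: "T \<subseteq> {..<n}" and PL: "PL \<in> pauli_group kL"
    and A: "supported_on n T A" "bare_implements kJ V A PL"
  shows "\<exists>P\<in>pauli_group n. supported_on n T P \<and> bare_implements kJ V P PL"
proof -
  obtain c t0 where PL_eq: "PL = pauli_mat kL c t0" and c: "c \<in> {1, -1, \<i>, -\<i>}"
    using PL unfolding pauli_group_def by blast
  define t where "t q = (if q < kJ then PI else t0 (q - kJ))" for q
  have encoded: "kron PL (1\<^sub>m (2^kJ)) = pauli_mat (kL+kJ) c t"
    unfolding PL_eq t_def by (rule kron_pauli_mat_one)
  have "hs_inner (2^(kL+kJ)) (pauli_mat (kL+kJ) c t) (mat_adjoint V * A * V) \<noteq> 0"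
    using A(2) c by (auto simp: bare_implements_def encoded hs_inner_pauli_mat_nonzero_iff)
  then obtain p where p: "p \<in> pauli_strings_on n T" "CSP V (pauli_mat n 1 p)"
    "hs_inner (2^(kL+kJ)) (pauli_mat (kL+kJ) c t) (mat_adjoint V * pauli_mat n 1 p * V) \<noteq> 0"
    by (rule overlapping_CSP_pauli_component[OF T A(1)])
  obtain a where a: "a \<in> {1, -1, \<i>, -\<i>}" "CSP V (pauli_mat n a p)"
    "mat_adjoint V * pauli_mat n a p * V = pauli_mat (kL+kJ) c t"
    by (rule rephased_CSP_pauli_implements[OF p(2) c p(3)])
  show ?thesis
  proof (intro bexI conjI)
    show "pauli_mat n a p \<in> pauli_group n"
      using a(1) unfolding pauli_group_def by blast
    show "supported_on n T (pauli_mat n a p)"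
      by (rule pauli_mat_supported_on[OF p(1)])
    show "bare_implements kJ V (pauli_mat n a p) PL"
      using a(2,3) unfolding bare_implements_def encoded by blast
  qed
qed

lemma supported_implements_if_paulis_implement:
  assumes paulis: "\<forall>PL\<in>pauli_group kL. \<exists>P\<in>pauli_group n. supported_on n T P \<and> bare_implements kJ V P PL"
    and AL: "AL \<in> carrier_mat (2^kL) (2^kL)"
  shows "\<exists>A\<in>carrier_mat (2^n) (2^n). supported_on n T A \<and> bare_implements kJ V A AL"
proof -
  let ?Y = "pauli_strings_on kL {..<kL}"
  obtain d where AL_exp: "AL = mat_lincomb (2^kL) (2^kL) ?Y d (pauli_mat kL 1)"
    by (rule pauli_expansion[OF AL])
  have "\<forall>p\<in>?Y. \<exists>P. P \<in> pauli_group n \<and> supported_on n T P \<and> bare_implements kJ V P (pauli_mat kL 1 p)"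
    using paulis unfolding pauli_group_def by blast
  then obtain P where P: "\<And>p. p \<in> ?Y \<Longrightarrow>
      P p \<in> pauli_group n \<and> supported_on n T (P p) \<and> bare_implements kJ V (P p) (pauli_mat kL 1 p)"
    by metis
  have V: "V \<in> carrier_mat (2^n) (2^kL * 2^kJ)"
    using V_carrier by (simp add: power_add)
  show ?thesis
  proof (intro bexI conjI)
    show "supported_on n T (mat_lincomb (2^n) (2^n) ?Y d P)"
      using P by (intro supported_on_mat_lincomb) blast
    show "bare_implements kJ V (mat_lincomb (2^n) (2^n) ?Y d P) AL"
      unfolding AL_exp using P by (intro bare_implements_mat_lincomb[OF V]) (auto intro: pauli_group_carrier)
  qed simp
qed

end

theorem lemma10:
  fixes n kL kJ :: nat and S :: "complex mat set" and V :: "complex mat" and R :: "nat set"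
  assumes "stabilizer_subsystem_code n kL kJ S V"
    and "R \<subseteq> {..<n}"
  shows "bare_cleanable n kL kJ V R \<longleftrightarrow>
    (\<forall>PL \<in> pauli_group kL. \<exists>P \<in> pauli_group n.
        supported_on n ({..<n} - R) P \<and> bare_implements kJ V P PL)"
proof -
  interpret subsystem_code n kL kJ S V
    by (rule subsystem_code.intro) (rule assms(1))
  have T: "{..<n} - R \<subseteq> {..<n}"
    by blast
  show ?thesis
    unfolding bare_cleanable_def
  proof (intro iffI ballI)
    fix PL
    assume "\<forall>AL\<in>carrier_mat (2^kL) (2^kL). \<exists>A\<in>carrier_mat (2^n) (2^n).
      supported_on n ({..<n} - R) A \<and> bare_implements kJ V A AL"
      and PL: "PL \<in> pauli_group kL"
    then obtain A where "supported_on n ({..<n} - R) A" "bare_implements kJ V A PL"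
      using pauli_group_carrier by blast
    then show "\<exists>P\<in>pauli_group n. supported_on n ({..<n} - R) P \<and> bare_implements kJ V P PL"
      by (rule supported_pauli_implements_if_supported_implements[OF T PL])
  qed (rule supported_implements_if_paulis_implement)
qed

end
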